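(* Let $n\ge3$. The permutation representation $\rho_3^{\mathbb{C}}$ of $S_n$ unites conjugacy classes if and only if $n$ is even. (For even $n$, $\sigma=(1,2)(3,4)\cdots(n-1,n)$ and $\tau=(1)(2)(3,4)\cdots(n-1,n)$ are non-conjugate with $\rho_3^{\mathbb{C}}(\sigma)$ similar to $\rho_3^{\mathbb{C}}(\tau)$.)
   Context: For $1\le k\le n$, $\rho_k^{\mathbb{F}}$ denotes the permutation representation over the field $\mathbb{F}$ of $S_n$ arising from its action on ordered $k$-tuples $(i_1,\dots,i_k)$ of distinct elements of $\{1,\dots,n\}$, given by $\pi\cdot(i_1,\dots,i_k)=(\pi(i_1),\dots,\pi(i_k))$. A representation $T$ of $G$ unites conjugacy classes if there are non-conjugate $\sigma,\tau\in G$ with $T(\sigma),T(\tau)$ similar matrices. *)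

theory Defs
  imports Complex_Main "HOL-Combinatorics.Permutations"
begin

definition tuples :: "nat \<Rightarrow> nat \<Rightarrow> nat list set" where
  "tuples k n = {xs. length xs = k \<and> distinct xs \<and> set xs \<subseteq> {1..n}}"

text \<open>Permutation matrix of p for the action p.(i1,...,ik) = (p i1, ..., p ik),
  rows/columns indexed by tuples: entry (x,y) is 1 iff p.y = x.\<close>
definition perm_rep :: "(nat \<Rightarrow> nat) \<Rightarrow> nat list \<Rightarrow> nat list \<Rightarrow> 'a::field" where
  "perm_rep p x y = (if map p y = x then 1 else 0)"

definition similar_on :: "'i set \<Rightarrow> ('i \<Rightarrow> 'i \<Rightarrow> 'a::field) \<Rightarrow> ('i \<Rightarrow> 'i \<Rightarrow> 'a) \<Rightarrow> bool" where
  "similar_on X A B \<longleftrightarrow> (\<exists>P Q.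
      (\<forall>x\<in>X. \<forall>y\<in>X. (\<Sum>z\<in>X. P x z * Q z y) = (if x = y then 1 else 0)) \<and>
      (\<forall>x\<in>X. \<forall>y\<in>X. (\<Sum>z\<in>X. Q x z * P z y) = (if x = y then 1 else 0)) \<and>
      (\<forall>x\<in>X. \<forall>y\<in>X. (\<Sum>z\<in>X. P x z * A z y) = (\<Sum>z\<in>X. B x z * P z y)))"

definition conj_Sn :: "nat \<Rightarrow> (nat \<Rightarrow> nat) \<Rightarrow> (nat \<Rightarrow> nat) \<Rightarrow> bool" where
  "conj_Sn n s t \<longleftrightarrow> (\<exists>g. g permutes {1..n} \<and> t = g \<circ> s \<circ> inv g)"

definition unites_conj :: "nat \<Rightarrow> 'i set \<Rightarrow> ((nat \<Rightarrow> nat) \<Rightarrow> 'i \<Rightarrow> 'i \<Rightarrow> 'a::field) \<Rightarrow> bool" where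
  "unites_conj n X T \<longleftrightarrow> (\<exists>s t. s permutes {1..n} \<and> t permutes {1..n} \<and>
      \<not> conj_Sn n s t \<and> similar_on X (T s) (T t))"

end

(*
  If \<rho>\<^sub>3(\<sigma>) and \<rho>\<^sub>3(\<tau>) are similar, then so are all their powers, so their traces agree. The trace
  of \<rho>\<^sub>3(\<sigma>\<^sup>m) is f(f-1)(f-2), where f is the number of fixed points of \<sigma>\<^sup>m, and this cubic is
  injective once f \<ge> 2. Hence for every m the fixed-point counts of \<sigma>\<^sup>m and \<tau>\<^sup>m agree unless both
  are at most 2. These counts are the divisor sums of c\<^sub>d (resp. e\<^sub>d), the number of points on
  d-cycles, and each c\<^sub>d, e\<^sub>d is a multiple of d. At the least d \<ge> 3 with c\<^sub>d \<noteq> e\<^sub>d one of the two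
  divisor sums at d is at least 3, so they are equal, yet they differ by c\<^sub>d - e\<^sub>d. The cases d = 1
  and d = 2 are excluded in the same way, at the least odd cycle length > 1 (which exists because n
  is odd) and at the least cycle length > 2 where the counts differ. So \<sigma> and \<tau> have the same cycle
  type and are conjugate.

  For even n, \<sigma> = (1 2)(3 4)\<dots>(n-1 n) and \<tau> = (3 4)\<dots>(n-1 n) act on triples as fixed-point-free
  involutions, so these actions are conjugate by a bijection of the triples, and the permutation matrix
  of that bijection makes \<rho>\<^sub>3(\<sigma>) and \<rho>\<^sub>3(\<tau>) similar. But \<tau> fixes 1 and \<sigma> fixes nothing.
*)
theory Submission
  imports Defs "HOL-Combinatorics.Orbits"
begin

section \<open>Counts with close divisor sums\<close>

lemma sum_agree_outside:
  fixes f g :: "'a \<Rightarrow> 'b::comm_monoid_add"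
  assumes "finite A" "E \<subseteq> A" "\<And>x. x \<in> A - E \<Longrightarrow> f x = g x"
  shows "sum f A + sum g E = sum g A + sum f E"
proof -
  have "sum f (A - E) = sum g (A - E)" using assms(3) by (rule sum.cong[OF refl])
  then show ?thesis
    using sum.subset_diff[OF assms(2,1), of f] sum.subset_diff[OF assms(2,1), of g]
    by (simp add: ac_simps)
qed

lemma odd_summand_if_odd_sum:
  fixes f :: "'a \<Rightarrow> nat"
  assumes "finite A" "odd (sum f A)" "\<And>x. x \<in> A \<Longrightarrow> x \<noteq> a \<Longrightarrow> even (f x)"
  shows "odd (f a)"
proof -
  have even_rest: "even (sum f (A - {a}))" using assms(3) by (intro dvd_sum) auto
  show ?thesis
  proof (cases "a \<in> A")
    case True
    then have "sum f A = f a + sum f (A - {a})" using assms(1) by (simp add: sum.remove)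
    then show ?thesis using assms(2) even_rest by simp
  next
    case False
    then show ?thesis using assms(2) even_rest by simp
  qed
qed

lemma eq_if_add_multiples_eq:
  fixes a b u v m :: nat
  assumes "a < m" "b < m" "m dvd u" "m dvd v" "a + u = b + v"
  shows "a = b"
proof -
  have "(a + u) mod m = a" "(b + v) mod m = b" using assms(1-4) by auto
  then show ?thesis using assms(5) by simp
qed

definition divisor_sum :: "(nat \<Rightarrow> nat) \<Rightarrow> nat \<Rightarrow> nat" where
  "divisor_sum c m = (\<Sum>d | d dvd m. c d)"

lemma divisor_sum_1: "divisor_sum c 1 = c 1"
  by (simp add: divisor_sum_def)

lemma divisor_sum_2: "divisor_sum c 2 = c 1 + c 2"
proof -
  have "{d. d dvd (2::nat)} = {1, 2}"
  proof (intro set_eqI iffI)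
    fix d :: nat assume "d \<in> {d. d dvd 2}"
    then have "d \<le> 2" "d \<noteq> 0" using dvd_imp_le[of d 2] by (cases "d = 0"; auto)+
    then show "d \<in> {1, 2}" by auto
  qed auto
  then show ?thesis by (simp add: divisor_sum_def)
qed

text \<open>Think of \<open>c d\<close> and \<open>e d\<close> as the numbers of points on \<open>d\<close>-cycles of two permutations of
  a set of odd size \<open>N\<close>; then \<open>divisor_sum c m\<close> is the number of fixed points of the \<open>m\<close>-th power.\<close>
locale close_divisor_sums =
  fixes c e :: "nat \<Rightarrow> nat" and N :: nat
  assumes dvd_c: "d dvd c d" and dvd_e: "d dvd e d"
    and c_beyond: "N < d \<Longrightarrow> c d = 0" and e_beyond: "N < d \<Longrightarrow> e d = 0"
    and total_eq: "(\<Sum>d\<le>N. c d) = (\<Sum>d\<le>N. e d)"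
    and total_odd: "odd (\<Sum>d\<le>N. c d)"
    and close: "0 < m \<Longrightarrow>
      divisor_sum c m = divisor_sum e m \<or> (divisor_sum c m < 3 \<and> divisor_sum e m < 3)"
begin

lemma divisor_sum_eq_if_nonzero:
  assumes "3 \<le> m" "c m \<noteq> 0 \<or> e m \<noteq> 0"
  shows "divisor_sum c m = divisor_sum e m"
proof -
  have fin: "finite {d. d dvd m}" using assms(1) by (simp add: finite_divisors_nat)
  have "c m \<le> divisor_sum c m" "e m \<le> divisor_sum e m"
    unfolding divisor_sum_def by (rule member_le_sum; use fin in simp)+
  moreover have "m \<le> c m \<or> m \<le> e m"
    using assms(2) dvd_imp_le[OF dvd_c[of m]] dvd_imp_le[OF dvd_e[of m]] by auto
  ultimately show ?thesis using close[of m] assms(1) by linarith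
qed

text \<open>The counts at \<open>m\<close> are multiples of \<open>m\<close>, so equal divisor sums at \<open>m\<close> pin down the
  remaining discrepancies modulo \<open>m\<close>.\<close>
lemma counts_eq_if_divisor_sums_eq:
  assumes "0 < m" "divisor_sum c m = divisor_sum e m"
    and "E \<subseteq> {d. d dvd m}" "m \<notin> E" "sum c E < m" "sum e E < m"
    and "\<And>d. d dvd m \<Longrightarrow> d < m \<Longrightarrow> d \<notin> E \<Longrightarrow> c d = e d"
  shows "sum c E = sum e E" "c m = e m"
proof -
  have "divisor_sum c m + sum e (insert m E) = divisor_sum e m + sum c (insert m E)"
    unfolding divisor_sum_def
  proof (rule sum_agree_outside)
    show "finite {d. d dvd m}" using assms(1) by (simp add: finite_divisors_nat)
    show "insert m E \<subseteq> {d. d dvd m}" using assms(3) by auto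
    show "c d = e d" if "d \<in> {d. d dvd m} - insert m E" for d
    proof (rule assms(7))
      show "d dvd m" "d \<notin> E" using that by auto
      show "d < m" using that dvd_imp_le[of d m] assms(1) by auto
    qed
  qed
  moreover have "finite E" using assms(1) by (intro finite_subset[OF assms(3)] finite_divisors_nat) simp
  ultimately have "sum e E + e m = sum c E + c m" using assms(2,4) by simp
  then show "sum c E = sum e E"
    using eq_if_add_multiples_eq[OF assms(5,6) dvd_c dvd_e] by simp
  with \<open>sum e E + e m = sum c E + c m\<close> show "c m = e m" by simp
qed

lemma count_0: "c 0 = 0" "e 0 = 0"
  using dvd_c[of 0] dvd_e[of 0] by simp_all

lemma count_eq_at_first_difference:
  assumes "3 \<le> m" "\<And>d. d dvd m \<Longrightarrow> d < m \<Longrightarrow> c d = e d"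
  shows "c m = e m"
proof (rule ccontr)
  assume ne: "c m \<noteq> e m"
  then have "divisor_sum c m = divisor_sum e m"
    using assms(1) by (intro divisor_sum_eq_if_nonzero) auto
  with assms have "c m = e m" by (intro counts_eq_if_divisor_sums_eq(2)[of m "{}"]) auto
  with ne show False ..
qed

text \<open>This is where the oddness of the total is used.\<close>
lemma exists_odd_count_nonzero:
  assumes "c 1 \<noteq> e 1" "c 1 < 3" "e 1 < 3"
  shows "\<exists>m. odd m \<and> 1 < m \<and> (c m \<noteq> 0 \<or> e m \<noteq> 0)"
proof (rule ccontr)
  assume "\<not> ?thesis"
  then have zero: "c d = 0 \<and> e d = 0" if "odd d" "1 < d" for d using that by auto
  have even_off_1: "even (c d) \<and> even (e d)" if "d \<noteq> 1" for d
  proof (cases "even d")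
    case True
    then show ?thesis using dvd_trans[OF _ dvd_c] dvd_trans[OF _ dvd_e] by blast
  next
    case False
    then have "1 < d" using that by (auto elim: oddE)
    then show ?thesis using zero False by simp
  qed
  have "odd (c 1)"
    by (rule odd_summand_if_odd_sum[of "{..N}"]) (use total_odd even_off_1 in auto)
  moreover have "odd (e 1)"
    by (rule odd_summand_if_odd_sum[of "{..N}"]) (use total_odd total_eq even_off_1 in auto)
  ultimately have "c 1 = 1" "e 1 = 1" using assms(2,3) by presburger+
  with assms(1) show False by simp
qed

lemma count_1_eq: "c 1 = e 1"
proof (rule ccontr)
  assume ne: "c 1 \<noteq> e 1"
  then have small: "c 1 < 3" "e 1 < 3" using close[of 1] unfolding divisor_sum_1 by auto
  define P where "P m \<longleftrightarrow> odd m \<and> 1 < m \<and> (c m \<noteq> 0 \<or> e m \<noteq> 0)" for m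
  define m where "m = (LEAST m. P m)"
  have Pm: "P m"
    unfolding m_def P_def using exists_odd_count_nonzero[OF ne small] by (rule LeastI_ex)
  have m3: "3 \<le> m" using Pm unfolding P_def by presburger
  have "sum c {1} = sum e {1}"
  proof (rule counts_eq_if_divisor_sums_eq(1))
    show "divisor_sum c m = divisor_sum e m"
      using Pm m3 by (intro divisor_sum_eq_if_nonzero) (auto simp: P_def)
    show "c d = e d" if "d dvd m" "d < m" "d \<notin> {1}" for d
    proof -
      have "odd d" using Pm that(1) unfolding P_def by (meson dvd_trans)
      moreover have "0 < d" using that(1) m3 by (cases d) auto
      ultimately have "\<not> P d" using that(2,3) not_less_Least[of d P] unfolding m_def by auto
      then show ?thesis using \<open>odd d\<close> \<open>0 < d\<close> that(3) by (auto simp: P_def)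
    qed
  qed (use m3 small in auto)
  with ne show False by simp
qed

lemma exists_count_ne_above_2:
  assumes "c 2 \<noteq> e 2"
  shows "\<exists>m. 2 < m \<and> c m \<noteq> e m"
proof (rule ccontr)
  assume none: "\<not> ?thesis"
  have agree: "c d = e d" if d2: "d \<noteq> 2" for d
  proof -
    consider "d = 0" | "d = 1" | "2 < d" using d2 by linarith
    then show ?thesis by cases (use none count_0 count_1_eq in auto)
  qed
  have "2 \<le> N" using assms c_beyond[of 2] e_beyond[of 2] by force
  have "sum c {..N} + sum e {2} = sum e {..N} + sum c {2}"
    by (rule sum_agree_outside) (use \<open>2 \<le> N\<close> agree in auto)
  then show False using assms total_eq by simp
qed

lemma count_2_eq: "c 2 = e 2"
proof (rule ccontr)
  assume ne: "c 2 \<noteq> e 2"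
  then have "divisor_sum c 2 \<noteq> divisor_sum e 2" using count_1_eq by (simp add: divisor_sum_2)
  then have "c 1 + c 2 < 3" "e 1 + e 2 < 3" using close[of 2] by (auto simp: divisor_sum_2)
  then have small: "c 2 < 4" "e 2 < 4" by auto
  define P where "P m \<longleftrightarrow> 2 < m \<and> c m \<noteq> e m" for m
  define m where "m = (LEAST m. P m)"
  have Pm: "P m"
    unfolding m_def P_def using exists_count_ne_above_2[OF ne] by (rule LeastI_ex)
  then have m3: "3 \<le> m" by (simp add: P_def)
  have below: "c d = e d" if less_m: "d < m" and d2: "d \<noteq> 2" for d
  proof -
    consider "d = 0" | "d = 1" | "2 < d" using d2 by linarith
    then show ?thesis
    proof cases
      case 3
      then show ?thesis using not_less_Least[of d P] less_m unfolding m_def P_def by blast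
    qed (use count_0 count_1_eq in auto)
  qed
  show False
  proof (cases "even m")
    case True
    have "sum c {2} = sum e {2}"
    proof (rule counts_eq_if_divisor_sums_eq(1))
      show "divisor_sum c m = divisor_sum e m"
        using Pm m3 by (intro divisor_sum_eq_if_nonzero) (auto simp: P_def)
      have "4 \<le> m" using m3 True by presburger
      then show "sum c {2} < m" "sum e {2} < m" using small by auto
      show "{2} \<subseteq> {d. d dvd m}" "m \<notin> {2}" using True m3 by auto
      show "c d = e d" if "d dvd m" "d < m" "d \<notin> {2}" for d
        using that(2,3) below by simp
    qed (use m3 in simp)
    with ne show False by simp
  next
    case False
    have "c m = e m"
    proof (rule count_eq_at_first_difference[OF m3])
      show "c d = e d" if "d dvd m" "d < m" for d
        using below[OF that(2)] that(1) False by auto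
    qed
    with Pm show False by (simp add: P_def)
  qed
qed

theorem counts_eq: "c = e"
proof
  fix d
  show "c d = e d"
  proof (induction d rule: less_induct)
    case (less d)
    consider "d = 0" | "d = 1" | "d = 2" | "3 \<le> d" by linarith
    then show ?case
    proof cases
      case 4
      then show ?thesis
      proof (rule count_eq_at_first_difference)
        show "c d' = e d'" if "d' dvd d" "d' < d" for d' using less.IH[OF that(2)] .
      qed
    qed (use count_0 count_1_eq count_2_eq in auto)
  qed
qed

end

section \<open>Periods and orbits\<close>

text \<open>\<open>x \<in> orbit f x\<close> says that \<open>x\<close> lies on a finite cycle of \<open>f\<close>; otherwise \<open>period f x\<close> is junk.\<close>
definition period :: "('a \<Rightarrow> 'a) \<Rightarrow> 'a \<Rightarrow> nat" where
  "period f x = funpow_dist1 f x x"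

lemma period_pos: "0 < period f x"
  by (simp add: period_def)

lemma funpow_period: "x \<in> orbit f x \<Longrightarrow> (f ^^ period f x) x = x"
  unfolding period_def by (rule funpow_dist1_prop)

lemma funpow_eq_self_iff_period_dvd:
  assumes "x \<in> orbit f x"
  shows "(f ^^ m) x = x \<longleftrightarrow> period f x dvd m"
proof
  assume "(f ^^ m) x = x"
  then have "(f ^^ (m mod period f x)) x = x"
    using funpow_mod_eq[OF funpow_period[OF assms]] by simp
  then have "m mod period f x = 0"
    using funpow_dist1_least[of "m mod period f x" f x x] period_pos[of f x]
    by (fastforce simp: period_def)
  then show "period f x dvd m" by auto
next
  assume "period f x dvd m"
  then show "(f ^^ m) x = x"
    using funpow_mod_eq[OF funpow_period[OF assms], of m] by simp
qed

lemma funpow_eq_funpow_iff: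
  assumes "x \<in> orbit f x"
  shows "(f ^^ i) x = (f ^^ j) x \<longleftrightarrow> i mod period f x = j mod period f x"
proof
  assume "(f ^^ i) x = (f ^^ j) x"
  then have "(f ^^ (i mod period f x)) x = (f ^^ (j mod period f x)) x"
    using funpow_mod_eq[OF funpow_period[OF assms]] by metis
  then show "i mod period f x = j mod period f x"
    using inj_on_funpow_dist1[OF assms] period_pos[of f x]
    unfolding period_def inj_on_def by simp
next
  assume "i mod period f x = j mod period f x"
  then show "(f ^^ i) x = (f ^^ j) x"
    using funpow_mod_eq[OF funpow_period[OF assms]] by metis
qed

lemma orbit_eq_image_period:
  "x \<in> orbit f x \<Longrightarrow> orbit f x = (\<lambda>n. (f ^^ n) x) ` {..<period f x}"
  unfolding period_def lessThan_atLeast0 by (rule orbit_conv_funpow_dist1)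

lemma card_orbit: "x \<in> orbit f x \<Longrightarrow> card (orbit f x) = period f x"
  using orbit_eq_image_period card_image[OF inj_on_funpow_dist1]
  by (metis card_lessThan lessThan_atLeast0 period_def)

lemma period_dvd_if_in_orbit:
  assumes "x \<in> orbit f x" "y \<in> orbit f x"
  shows "period f y dvd period f x"
proof -
  obtain i where y: "y = (f ^^ i) x" using assms(2) by (auto simp: orbit_altdef)
  have "(f ^^ period f x) y = (f ^^ (period f x + i)) x"
    unfolding y by (simp add: funpow_add)
  also have "\<dots> = (f ^^ i) ((f ^^ period f x) x)"
    by (subst add.commute) (simp add: funpow_add)
  also have "\<dots> = y" using funpow_period[OF assms(1)] y by simp
  finally show ?thesis
    using funpow_eq_self_iff_period_dvd[OF self_in_orbit_trans[OF assms]] by simp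
qed

lemma period_eq_if_in_orbit:
  assumes "x \<in> orbit f x" "y \<in> orbit f x"
  shows "period f y = period f x"
  using period_dvd_if_in_orbit[OF assms] assms
    period_dvd_if_in_orbit[OF self_in_orbit_trans[OF assms] orbit_swap[OF assms]]
  by (simp add: dvd_antisym)

lemma period_eq_2_if_involution:
  assumes "f x \<noteq> x" "f (f x) = x"
  shows "period f x = 2"
proof -
  have "(f ^^ 2) x = x" using assms(2) by (simp add: numeral_2_eq_2)
  then have "x \<in> orbit f x" unfolding orbit_altdef by (intro CollectI exI[of _ 2]) simp
  have "period f x dvd 2"
    using funpow_eq_self_iff_period_dvd[OF \<open>x \<in> orbit f x\<close>, of 2] \<open>(f ^^ 2) x = x\<close> by simp
  moreover have "period f x \<noteq> 1"
    using funpow_eq_self_iff_period_dvd[OF \<open>x \<in> orbit f x\<close>, of 1] assms(1) by auto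
  ultimately show ?thesis using dvd_imp_le[of "period f x" 2] period_pos[of f x] by linarith
qed

lemma self_in_orbit_if_bij_betw:
  assumes "finite S" "bij_betw f S S" "x \<in> S"
  shows "x \<in> orbit f x"
proof -
  have "bij_betw (perm_restrict f S) S S"
    using assms(2) by (rule bij_betw_cong[THEN iffD1, rotated]) (simp add: perm_restrict_simps)
  then have "perm_restrict f S permutes S"
    by (rule bij_imp_permutes) (simp add: perm_restrict_simps)
  then have "x \<in> orbit (perm_restrict f S) x"
    using assms(1) by (intro permutation_self_in_orbit permutes_imp_permutation)
  moreover have "orbit f x = orbit (perm_restrict f S) x"
    using assms(2,3) by (intro orbit_cong0[of x S]) (auto simp: perm_restrict_simps bij_betw_def)
  ultimately show ?thesis by simp
qed

lemma orbit_subset_if_bij_betw: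
  assumes "bij_betw f S S" "x \<in> S"
  shows "orbit f x \<subseteq> S"
proof
  fix y assume "y \<in> orbit f x"
  then show "y \<in> S" by induction (use assms in \<open>auto simp: bij_betw_def\<close>)
qed

lemma image_orbit: "x \<in> orbit f x \<Longrightarrow> f ` orbit f x = orbit f x"
proof (intro equalityI subsetI)
  fix y assume "x \<in> orbit f x" "y \<in> orbit f x"
  then obtain n where "0 < n" "y = (f ^^ n) x" by (auto simp: orbit_altdef)
  then have "y = f ((f ^^ (n - 1)) x)" by (metis Suc_diff_1 comp_apply funpow.simps(2))
  moreover have "(f ^^ (n - 1)) x \<in> orbit f x"
    using orbit_altdef_self_in[OF \<open>x \<in> orbit f x\<close>] by auto
  ultimately show "y \<in> f ` orbit f x" by blast
qed (auto intro: orbit.step)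

lemma bij_betw_Diff_orbit:
  assumes "finite S" "bij_betw f S S" "x \<in> S"
  shows "bij_betw f (S - orbit f x) (S - orbit f x)"
proof -
  have sub: "orbit f x \<subseteq> S" by (rule orbit_subset_if_bij_betw[OF assms(2,3)])
  have "inj_on f (orbit f x)" using assms(2) sub by (auto simp: bij_betw_def intro: inj_on_subset)
  then have "bij_betw f (orbit f x) (orbit f x)"
    using image_orbit[OF self_in_orbit_if_bij_betw[OF assms]] by (simp add: bij_betw_def)
  then show ?thesis using bij_betw_DiffI[OF assms(2)] sub by blast
qed

definition period_count :: "('a \<Rightarrow> 'a) \<Rightarrow> 'a set \<Rightarrow> nat \<Rightarrow> nat" where
  "period_count f S d = card {x \<in> S. period f x = d}"

lemma period_count_Diff_orbit:
  assumes "finite S" "bij_betw f S S" "x \<in> S"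
  shows "period_count f S d
    = period_count f (S - orbit f x) d + (if period f x = d then period f x else 0)"
proof -
  have x: "x \<in> orbit f x" by (rule self_in_orbit_if_bij_betw[OF assms])
  have sub: "orbit f x \<subseteq> S" by (rule orbit_subset_if_bij_betw[OF assms(2,3)])
  have "{y \<in> orbit f x. period f y = d} = (if period f x = d then orbit f x else {})"
    using period_eq_if_in_orbit[OF x] by auto
  then have "card {y \<in> orbit f x. period f y = d} = (if period f x = d then period f x else 0)"
    using card_orbit[OF x] by simp
  moreover have "{y \<in> S. period f y = d}
      = {y \<in> S - orbit f x. period f y = d} \<union> {y \<in> orbit f x. period f y = d}"
    using sub by auto
  then have "card {y \<in> S. period f y = d}
      = card {y \<in> S - orbit f x. period f y = d} + card {y \<in> orbit f x. period f y = d}"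
    using assms(1) finite_subset[OF sub] by (subst card_Un_disjoint[symmetric]) auto
  ultimately show ?thesis unfolding period_count_def by simp
qed

lemma period_count_dvd:
  assumes "finite S" "bij_betw f S S"
  shows "d dvd period_count f S d"
  using assms
proof (induction S rule: finite_psubset_induct)
  case (psubset S)
  show ?case
  proof (cases "S = {}")
    case False
    then obtain x where x: "x \<in> S" by blast
    have "S - orbit f x \<subset> S"
      using x self_in_orbit_if_bij_betw[OF psubset.hyps(1) psubset.prems x] by blast
    then have "d dvd period_count f (S - orbit f x) d"
      using psubset bij_betw_Diff_orbit[OF psubset.hyps(1) psubset.prems x] by blast
    then show ?thesis
      using period_count_Diff_orbit[OF psubset.hyps(1) psubset.prems x, of d] by auto
  qed (simp add: period_count_def)
qed

lemma period_le_card: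
  assumes "finite S" "bij_betw f S S" "x \<in> S"
  shows "period f x \<le> card S"
proof -
  have "orbit f x \<subseteq> S" by (rule orbit_subset_if_bij_betw[OF assms(2,3)])
  then show ?thesis
    using card_orbit[OF self_in_orbit_if_bij_betw[OF assms]] card_mono[OF assms(1)] by metis
qed

lemma period_count_eq_0: "finite S \<Longrightarrow> bij_betw f S S \<Longrightarrow> card S < d \<Longrightarrow> period_count f S d = 0"
  unfolding period_count_def using period_le_card by fastforce

lemma sum_period_count:
  assumes "finite S" "bij_betw f S S"
  shows "(\<Sum>d\<le>card S. period_count f S d) = card S"
proof -
  have "period f ` S \<subseteq> {..card S}" using period_le_card[OF assms] by auto
  from sum.group[OF assms(1) finite_atMost this, of "\<lambda>_. 1::nat"] show ?thesis
    by (simp add: period_count_def)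
qed

lemma card_fixed_points_eq_divisor_sum:
  assumes "finite S" "bij_betw f S S" "0 < m"
  shows "card {x \<in> S. (f ^^ m) x = x} = divisor_sum (period_count f S) m"
proof -
  have "(f ^^ m) x = x \<longleftrightarrow> period f x dvd m" if "x \<in> S" for x
    using funpow_eq_self_iff_period_dvd[OF self_in_orbit_if_bij_betw[OF assms(1,2) that]] .
  then have fixed: "{x \<in> S. (f ^^ m) x = x} = {x \<in> S. period f x dvd m}" by auto
  have "finite {x \<in> S. period f x dvd m}" "finite {d. d dvd m}" using assms(1,3) by simp_all
  moreover have "period f ` {x \<in> S. period f x dvd m} \<subseteq> {d. d dvd m}" by auto
  ultimately have "(\<Sum>d | d dvd m. card {x \<in> {x \<in> S. period f x dvd m}. period f x = d})
      = card {x \<in> S. period f x dvd m}"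
    unfolding card_eq_sum by (rule sum.group)
  also have "(\<Sum>d | d dvd m. card {x \<in> {x \<in> S. period f x dvd m}. period f x = d})
      = divisor_sum (period_count f S) m"
    unfolding divisor_sum_def period_count_def by (intro sum.cong refl arg_cong[where f=card]) auto
  finally show ?thesis unfolding fixed by simp
qed

lemma intertwining_bij_orbits:
  assumes x: "x \<in> orbit f x" and y: "y \<in> orbit g y" and "period f x = period g y"
  shows "\<exists>h. bij_betw h (orbit f x) (orbit g y) \<and> (\<forall>z \<in> orbit f x. h (f z) = g (h z))"
proof -
  define h where "h z = (g ^^ funpow_dist f x z) y" for z
  have h_funpow: "h ((f ^^ n) x) = (g ^^ n) y" for n
  proof -
    have "(f ^^ funpow_dist f x ((f ^^ n) x)) x = (f ^^ n) x"
      using x by (intro funpow_dist_prop funpow_in_orbit)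
    then show ?thesis
      unfolding h_def using funpow_eq_funpow_iff[OF x] funpow_eq_funpow_iff[OF y] assms(3)
      by simp
  qed
  have "bij_betw h (orbit f x) (orbit g y)"
  proof (rule bij_betw_imageI)
    show "inj_on h (orbit f x)"
    proof
      fix a b assume "a \<in> orbit f x" "b \<in> orbit f x" "h a = h b"
      then obtain i j where "a = (f ^^ i) x" "b = (f ^^ j) x" "(g ^^ i) y = (g ^^ j) y"
        using orbit_eq_image_period[OF x] h_funpow by auto
      then show "a = b"
        using funpow_eq_funpow_iff[OF x] funpow_eq_funpow_iff[OF y] assms(3) by simp
    qed
    show "h ` orbit f x = orbit g y"
      unfolding orbit_eq_image_period[OF x] orbit_eq_image_period[OF y] image_image h_funpow
      using assms(3) by simp
  qed
  moreover have "h (f z) = g (h z)" if z: "z \<in> orbit f x" for z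
  proof -
    obtain n where "z = (f ^^ n) x" using z orbit_eq_image_period[OF x] by auto
    then show ?thesis using h_funpow[of "Suc n"] h_funpow[of n] by simp
  qed
  ultimately show ?thesis by blast
qed

lemma intertwining_bij_Un:
  assumes "bij_betw h1 A1 B1" "\<forall>x \<in> A1. h1 (f x) = g (h1 x)" "f ` A1 \<subseteq> A1"
    and "bij_betw h2 A2 B2" "\<forall>x \<in> A2. h2 (f x) = g (h2 x)" "f ` A2 \<subseteq> A2"
    and "A1 \<inter> A2 = {}" "B1 \<inter> B2 = {}"
  shows "\<exists>h. bij_betw h (A1 \<union> A2) (B1 \<union> B2) \<and> (\<forall>x \<in> A1 \<union> A2. h (f x) = g (h x))"
proof -
  define h where "h x = (if x \<in> A1 then h1 x else h2 x)" for x
  have "bij_betw h A1 B1" using assms(1) by (rule bij_betw_cong[THEN iffD1, rotated]) (simp add: h_def)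
  moreover have "bij_betw h A2 B2"
    by (rule bij_betw_cong[THEN iffD1, OF _ assms(4)]) (use assms(7) in \<open>auto simp: h_def\<close>)
  ultimately have "bij_betw h (A1 \<union> A2) (B1 \<union> B2)" using assms(8) by (rule bij_betw_combine)
  moreover have "h (f x) = g (h x)" if "x \<in> A1 \<union> A2" for x
    using that assms(2,3,5,6,7) by (auto simp: h_def)
  ultimately show ?thesis by blast
qed

lemma exists_same_period:
  assumes "finite S" "x \<in> S" "\<And>d. period_count f S d = period_count g T d"
  shows "\<exists>y \<in> T. period g y = period f x"
proof -
  have "0 < period_count f S (period f x)"
    unfolding period_count_def using assms(1,2) by (auto simp: card_gt_0_iff)
  then have "{y \<in> T. period g y = period f x} \<noteq> {}"
    using assms(3) unfolding period_count_def by force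
  then show ?thesis by blast
qed

text \<open>Same cycle type implies conjugate: match an orbit of \<open>f\<close> with an orbit of \<open>g\<close> of the same
  length and recurse on the complements.\<close>
theorem intertwining_bij_if_period_count_eq:
  assumes "finite S" "bij_betw f S S" "finite T" "bij_betw g T T"
    and "\<And>d. period_count f S d = period_count g T d"
  shows "\<exists>h. bij_betw h S T \<and> (\<forall>x \<in> S. h (f x) = g (h x))"
  using assms
proof (induction S arbitrary: T rule: finite_psubset_induct)
  case (psubset S)
  note bij_f = psubset.hyps(1) psubset.prems(1) and bij_g = psubset.prems(2,3)
    and counts = psubset.prems(4)
  show ?case
  proof (cases "S = {}")
    case True
    have "T = {}"
    proof (rule ccontr)
      assume "T \<noteq> {}"
      then obtain y where "y \<in> T" by blast
      with exists_same_period[OF bij_g(1) this counts[symmetric]] True show False by simp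
    qed
    with True show ?thesis by (simp add: bij_betw_def)
  next
    case False
    then obtain x where "x \<in> S" by blast
    with exists_same_period[OF bij_f(1) _ counts]
    obtain y where "y \<in> T" and period_y: "period g y = period f x" by blast
    let ?S' = "S - orbit f x" and ?T' = "T - orbit g y"
    have x: "x \<in> orbit f x" by (rule self_in_orbit_if_bij_betw[OF bij_f \<open>x \<in> S\<close>])
    have y: "y \<in> orbit g y" by (rule self_in_orbit_if_bij_betw[OF bij_g \<open>y \<in> T\<close>])
    obtain h1 where h1: "bij_betw h1 (orbit f x) (orbit g y)" "\<forall>z \<in> orbit f x. h1 (f z) = g (h1 z)"
      using intertwining_bij_orbits[OF x y period_y[symmetric]] by blast
    have "period_count f ?S' d = period_count g ?T' d" for d
      using period_count_Diff_orbit[OF bij_f \<open>x \<in> S\<close>, of d]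
        period_count_Diff_orbit[OF bij_g \<open>y \<in> T\<close>, of d, unfolded period_y] counts[of d]
      by linarith
    moreover have "?S' \<subset> S" using x \<open>x \<in> S\<close> by blast
    ultimately obtain h2 where h2: "bij_betw h2 ?S' ?T'" "\<forall>z \<in> ?S'. h2 (f z) = g (h2 z)"
      using psubset.IH[OF _ bij_betw_Diff_orbit[OF bij_f \<open>x \<in> S\<close>] finite_Diff[OF bij_g(1)]
          bij_betw_Diff_orbit[OF bij_g \<open>y \<in> T\<close>]]
      by blast
    have "\<exists>h. bij_betw h (orbit f x \<union> ?S') (orbit g y \<union> ?T')
        \<and> (\<forall>z \<in> orbit f x \<union> ?S'. h (f z) = g (h z))"
    proof (rule intertwining_bij_Un[OF h1 _ h2])
      show "f ` orbit f x \<subseteq> orbit f x" using image_orbit[OF x] by simp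
      show "f ` ?S' \<subseteq> ?S'" using bij_betw_Diff_orbit[OF bij_f \<open>x \<in> S\<close>] by (simp add: bij_betw_def)
    qed auto
    moreover have "orbit f x \<union> ?S' = S" "orbit g y \<union> ?T' = T"
      using orbit_subset_if_bij_betw[OF bij_f(2) \<open>x \<in> S\<close>]
        orbit_subset_if_bij_betw[OF bij_g(2) \<open>y \<in> T\<close>] by auto
    ultimately show ?thesis by simp
  qed
qed

section \<open>Matrices indexed by a finite set\<close>

definition mat_mul :: "'i set \<Rightarrow> ('i \<Rightarrow> 'i \<Rightarrow> 'a::semiring_0) \<Rightarrow> ('i \<Rightarrow> 'i \<Rightarrow> 'a) \<Rightarrow> 'i \<Rightarrow> 'i \<Rightarrow> 'a"
  where "mat_mul X A B x y = (\<Sum>z\<in>X. A x z * B z y)"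

definition mat_one :: "'i \<Rightarrow> 'i \<Rightarrow> 'a::{zero,one}" where
  "mat_one x y = (if x = y then 1 else 0)"

primrec mat_pow :: "'i set \<Rightarrow> ('i \<Rightarrow> 'i \<Rightarrow> 'a::semiring_1) \<Rightarrow> nat \<Rightarrow> 'i \<Rightarrow> 'i \<Rightarrow> 'a" where
  "mat_pow X A 0 = mat_one"
| "mat_pow X A (Suc m) = mat_mul X A (mat_pow X A m)"

definition mat_trace :: "'i set \<Rightarrow> ('i \<Rightarrow> 'i \<Rightarrow> 'a::comm_monoid_add) \<Rightarrow> 'a" where
  "mat_trace X A = (\<Sum>x\<in>X. A x x)"

definition mat_eq_on :: "'i set \<Rightarrow> ('i \<Rightarrow> 'i \<Rightarrow> 'a) \<Rightarrow> ('i \<Rightarrow> 'i \<Rightarrow> 'a) \<Rightarrow> bool" where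
  "mat_eq_on X A B \<longleftrightarrow> (\<forall>x\<in>X. \<forall>y\<in>X. A x y = B x y)"

lemma mat_eq_on_refl: "mat_eq_on X A A"
  by (simp add: mat_eq_on_def)

lemma mat_eq_on_trans [trans]: "mat_eq_on X A B \<Longrightarrow> mat_eq_on X B C \<Longrightarrow> mat_eq_on X A C"
  by (simp add: mat_eq_on_def)

lemma mat_eq_on_sym: "mat_eq_on X A B \<Longrightarrow> mat_eq_on X B A"
  by (simp add: mat_eq_on_def)

lemma similar_on_iff_mat_eq_on:
  "similar_on X A B \<longleftrightarrow> (\<exists>P Q. mat_eq_on X (mat_mul X P Q) mat_one
     \<and> mat_eq_on X (mat_mul X Q P) mat_one \<and> mat_eq_on X (mat_mul X P A) (mat_mul X B P))"
  by (simp add: similar_on_def mat_eq_on_def mat_mul_def mat_one_def)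

lemma mat_mul_assoc:
  "finite X \<Longrightarrow> mat_mul X (mat_mul X A B) C = mat_mul X A (mat_mul X B C)"
  by (intro ext, unfold mat_mul_def sum_distrib_left sum_distrib_right)
    (subst sum.swap, simp add: mult.assoc)

lemma mat_mul_cong:
  "mat_eq_on X A A' \<Longrightarrow> mat_eq_on X B B' \<Longrightarrow> mat_eq_on X (mat_mul X A B) (mat_mul X A' B')"
  unfolding mat_eq_on_def mat_mul_def by (auto intro!: sum.cong)

lemma mat_mul_one_left:
  assumes "finite X"
  shows "mat_eq_on X (mat_mul X mat_one A) (A :: _ \<Rightarrow> _ \<Rightarrow> 'a::semiring_1)"
proof -
  have "mat_mul X mat_one A x y = (\<Sum>z\<in>X. if x = z then A z y else 0)" for x y
    unfolding mat_mul_def mat_one_def by (intro sum.cong) auto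
  then show ?thesis using assms by (simp add: mat_eq_on_def)
qed

lemma mat_mul_one_right:
  assumes "finite X"
  shows "mat_eq_on X (mat_mul X A mat_one) (A :: _ \<Rightarrow> _ \<Rightarrow> 'a::semiring_1)"
proof -
  have "mat_mul X A mat_one x y = (\<Sum>z\<in>X. if z = y then A x z else 0)" for x y
    unfolding mat_mul_def mat_one_def by (intro sum.cong) auto
  then show ?thesis using assms by (simp add: mat_eq_on_def)
qed

lemma mat_trace_cong: "mat_eq_on X A B \<Longrightarrow> mat_trace X A = mat_trace X B"
  unfolding mat_eq_on_def mat_trace_def by (auto intro!: sum.cong)

lemma mat_trace_mul_commute:
  "mat_trace X (mat_mul X A B) = mat_trace X (mat_mul X B (A :: _ \<Rightarrow> _ \<Rightarrow> 'a::comm_semiring_0))"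
  unfolding mat_trace_def mat_mul_def by (subst sum.swap) (simp add: mult.commute)

theorem similar_on_imp_trace_mat_pow_eq:
  assumes "finite X" "similar_on X A B"
  shows "mat_trace X (mat_pow X A m) = mat_trace X (mat_pow X B (m::nat))"
proof -
  obtain P Q where PQ: "mat_eq_on X (mat_mul X P Q) mat_one"
    and QP: "mat_eq_on X (mat_mul X Q P) mat_one"
    and PA: "mat_eq_on X (mat_mul X P A) (mat_mul X B P)"
    using assms(2) unfolding similar_on_iff_mat_eq_on by blast
  have PA_pow: "mat_eq_on X (mat_mul X P (mat_pow X A k)) (mat_mul X (mat_pow X B k) P)" for k
  proof (induction k)
    case 0
    have "mat_eq_on X (mat_mul X P mat_one) P" by (rule mat_mul_one_right[OF assms(1)])
    also have "mat_eq_on X P (mat_mul X mat_one P)" by (rule mat_eq_on_sym[OF mat_mul_one_left[OF assms(1)]])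
    finally show ?case by simp
  next
    case (Suc k)
    have "mat_eq_on X (mat_mul X P (mat_pow X A (Suc k))) (mat_mul X B (mat_mul X P (mat_pow X A k)))"
      using mat_mul_cong[OF PA mat_eq_on_refl, of "mat_pow X A k"]
      by (simp add: mat_mul_assoc[OF assms(1)])
    also have "mat_eq_on X \<dots> (mat_mul X (mat_pow X B (Suc k)) P)"
      using mat_mul_cong[OF mat_eq_on_refl Suc.IH, of B] by (simp add: mat_mul_assoc[OF assms(1)])
    finally show ?case .
  qed
  have "mat_trace X (mat_pow X A m) = mat_trace X (mat_mul X (mat_mul X Q P) (mat_pow X A m))"
    by (rule mat_trace_cong, rule mat_eq_on_sym, rule mat_eq_on_trans[OF mat_mul_cong[OF QP mat_eq_on_refl]])
      (rule mat_mul_one_left[OF assms(1)])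
  also have "\<dots> = mat_trace X (mat_mul X Q (mat_mul X P (mat_pow X A m)))"
    by (simp add: mat_mul_assoc[OF assms(1)])
  also have "\<dots> = mat_trace X (mat_mul X Q (mat_mul X (mat_pow X B m) P))"
    by (rule mat_trace_cong[OF mat_mul_cong[OF mat_eq_on_refl PA_pow]])
  also have "\<dots> = mat_trace X (mat_mul X (mat_mul X Q (mat_pow X B m)) P)"
    by (simp add: mat_mul_assoc[OF assms(1)])
  also have "\<dots> = mat_trace X (mat_mul X P (mat_mul X Q (mat_pow X B m)))"
    by (rule mat_trace_mul_commute)
  also have "\<dots> = mat_trace X (mat_mul X (mat_mul X P Q) (mat_pow X B m))"
    by (simp add: mat_mul_assoc[OF assms(1)])
  also have "\<dots> = mat_trace X (mat_pow X B m)"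
    by (rule mat_trace_cong, rule mat_eq_on_trans[OF mat_mul_cong[OF PQ mat_eq_on_refl]])
      (rule mat_mul_one_left[OF assms(1)])
  finally show ?thesis .
qed

definition fun_matrix :: "('i \<Rightarrow> 'i) \<Rightarrow> 'i \<Rightarrow> 'i \<Rightarrow> 'a::{zero,one}" where
  "fun_matrix \<phi> x y = (if \<phi> y = x then 1 else 0)"

lemma perm_rep_eq_fun_matrix: "perm_rep p = fun_matrix (map p)"
  by (intro ext) (simp add: perm_rep_def fun_matrix_def)

lemma mat_mul_fun_matrix:
  assumes "finite X" "\<psi> y \<in> X"
  shows "mat_mul X (fun_matrix \<phi>) (fun_matrix \<psi>) x y = (fun_matrix (\<phi> \<circ> \<psi>) x y :: 'a::semiring_1)"
proof -
  have "mat_mul X (fun_matrix \<phi>) (fun_matrix \<psi>) x y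
      = (\<Sum>z\<in>X. if z = \<psi> y then (fun_matrix \<phi> x z :: 'a) else 0)"
    unfolding mat_mul_def by (intro sum.cong) (auto simp: fun_matrix_def)
  also have "\<dots> = fun_matrix (\<phi> \<circ> \<psi>) x y" using assms by (simp add: fun_matrix_def)
  finally show ?thesis .
qed

lemma mat_pow_fun_matrix:
  assumes "finite X" "\<phi> ` X \<subseteq> X" "y \<in> X"
  shows "mat_pow X (fun_matrix \<phi>) m x y = (fun_matrix (\<phi> ^^ m) x y :: 'a::semiring_1)"
proof (induction m arbitrary: x)
  case 0
  show ?case by (simp add: mat_one_def fun_matrix_def eq_commute)
next
  case (Suc m)
  have "(\<phi> ^^ m) y \<in> X" using assms(2,3) by (induction m) auto
  have "mat_pow X (fun_matrix \<phi>) (Suc m) x y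
      = (mat_mul X (fun_matrix \<phi>) (fun_matrix (\<phi> ^^ m)) x y :: 'a)"
    by (simp add: mat_mul_def Suc.IH)
  also have "\<dots> = fun_matrix (\<phi> \<circ> \<phi> ^^ m) x y"
    by (rule mat_mul_fun_matrix[where \<psi> = "\<phi> ^^ m", OF assms(1) \<open>(\<phi> ^^ m) y \<in> X\<close>])
  finally show ?case by (simp add: comp_def)
qed

lemma mat_trace_fun_matrix:
  "finite X \<Longrightarrow> mat_trace X (fun_matrix \<phi>) = (of_nat (card {x \<in> X. \<phi> x = x}) :: 'a::semiring_1)"
  by (simp add: mat_trace_def fun_matrix_def sum.If_cases Int_def)

lemma similar_on_fun_matrix_if_intertwined:
  assumes "finite X" "bij_betw h X X" "\<phi> ` X \<subseteq> X" "\<forall>x\<in>X. h (\<phi> x) = \<psi> (h x)"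
  shows "similar_on X (fun_matrix \<phi>) (fun_matrix \<psi> :: _ \<Rightarrow> _ \<Rightarrow> 'a::field)"
  unfolding similar_on_iff_mat_eq_on
proof (intro exI conjI)
  let ?h' = "inv_into X h"
  have h_in: "h y \<in> X" and h'_in: "?h' y \<in> X" if "y \<in> X" for y
    using that assms(2) by (auto simp: bij_betw_def inv_into_into)
  note mul = mat_mul_fun_matrix[OF assms(1), where 'a = 'a]
  show "mat_eq_on X (mat_mul X (fun_matrix h) (fun_matrix ?h')) (mat_one :: _ \<Rightarrow> _ \<Rightarrow> 'a)"
    unfolding mat_eq_on_def
    using mul[where \<psi> = ?h', OF h'_in] bij_betw_inv_into_right[OF assms(2)]
    by (auto simp: fun_matrix_def mat_one_def)
  show "mat_eq_on X (mat_mul X (fun_matrix ?h') (fun_matrix h)) (mat_one :: _ \<Rightarrow> _ \<Rightarrow> 'a)"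
    unfolding mat_eq_on_def
    using mul[where \<psi> = h, OF h_in] bij_betw_inv_into_left[OF assms(2)]
    by (auto simp: fun_matrix_def mat_one_def)
  show "mat_eq_on X (mat_mul X (fun_matrix h) (fun_matrix \<phi>))
      (mat_mul X (fun_matrix \<psi>) (fun_matrix h) :: _ \<Rightarrow> _ \<Rightarrow> 'a)"
    unfolding mat_eq_on_def
    using mul[where \<psi> = h, OF h_in] mul[where \<psi> = \<phi>] assms(3,4) by (auto simp: fun_matrix_def)
qed

section \<open>The action on triples\<close>

lemma finite_tuples: "finite (tuples k n)"
proof -
  have "tuples k n \<subseteq> {xs. set xs \<subseteq> {1..n} \<and> length xs = k}" by (auto simp: tuples_def)
  then show ?thesis using finite_lists_length_eq[of "{1..n}" k] finite_subset by blast
qed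

lemma map_in_tuples:
  assumes "s permutes {1..n}" "xs \<in> tuples k n"
  shows "map s xs \<in> tuples k n"
proof -
  have "inj_on s (set xs)" using permutes_inj[OF assms(1)] by (auto intro: inj_on_subset)
  then show ?thesis
    using assms(2) permutes_in_image[OF assms(1)] by (auto simp: tuples_def distinct_map)
qed

lemma bij_betw_map_tuples:
  assumes "s permutes {1..n}"
  shows "bij_betw (map s) (tuples k n) (tuples k n)"
proof (rule bij_betw_byWitness[where f' = "map (inv s)"])
  show "\<forall>xs \<in> tuples k n. map (inv s) (map s xs) = xs" "\<forall>xs \<in> tuples k n. map s (map (inv s) xs) = xs"
    using permutes_inverses[OF assms] by (simp_all add: map_idI)
  show "map s ` tuples k n \<subseteq> tuples k n" "map (inv s) ` tuples k n \<subseteq> tuples k n"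
    using map_in_tuples[OF assms] map_in_tuples[OF permutes_inv[OF assms]] by auto
qed

lemma map_eq_self_iff: "map p xs = xs \<longleftrightarrow> (\<forall>i \<in> set xs. p i = i)"
  by (induction xs) auto

lemma card_fixed_tuples_3:
  "card {xs \<in> tuples 3 n. map p xs = xs} = F * (F - 1) * (F - 2)"
  if "F = card {i \<in> {1..n}. p i = i}"
proof -
  let ?A = "{i \<in> {1..n}. p i = i}"
  have "{xs \<in> tuples 3 n. map p xs = xs} = {xs. length xs = 3 \<and> distinct xs \<and> set xs \<subseteq> ?A}"
    by (auto simp: tuples_def map_eq_self_iff)
  moreover have "card {xs. length xs = 3 \<and> distinct xs \<and> set xs \<subseteq> ?A} = F * (F - 1) * (F - 2)"
  proof (cases "3 \<le> F")
    case True
    have "card {xs. length xs = 3 \<and> distinct xs \<and> set xs \<subseteq> ?A} = \<Prod>{F - 3 + 1..F}"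
      using card_lists_distinct_length_eq[of ?A 3] True unfolding that by simp
    also obtain k where "F = k + 3" using True by (metis add.commute le_add_diff_inverse)
    then have "{F - 3 + 1..F} = {k + 1, k + 2, k + 3}" by auto
    finally show ?thesis using \<open>F = k + 3\<close> by (simp add: mult_ac)
  next
    case False
    have "\<not> (length xs = 3 \<and> distinct xs \<and> set xs \<subseteq> ?A)" for xs
    proof
      assume xs: "length xs = 3 \<and> distinct xs \<and> set xs \<subseteq> ?A"
      then have "3 \<le> F" using card_mono[of ?A "set xs"] distinct_card[of xs] that by simp
      with False show False by simp
    qed
    then have no_lists: "{xs. length xs = 3 \<and> distinct xs \<and> set xs \<subseteq> ?A} = {}" by blast
    have "F = 0 \<or> F = 1 \<or> F = 2" using False by auto
    then have "F * (F - 1) * (F - 2) = 0" by auto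
    then show ?thesis unfolding no_lists by simp
  qed
  ultimately show ?thesis by simp
qed

lemma falling_factorial_3_eq:
  fixes a b :: nat
  assumes "a * (a - 1) * (a - 2) = b * (b - 1) * (b - 2)"
  shows "a = b \<or> (a < 3 \<and> b < 3)"
proof -
  have mono: "x * (x - 1) * (x - 2) < y * (y - 1) * (y - 2)" if "3 \<le> y" "x < y" for x y :: nat
  proof -
    have "(x - 1) * (x - 2) \<le> (y - 1) * (y - 2)" using that by (intro mult_le_mono) auto
    then have "x * ((x - 1) * (x - 2)) \<le> x * ((y - 1) * (y - 2))" by (rule mult_le_mono2)
    also have "\<dots> < y * ((y - 1) * (y - 2))" using that by (intro mult_strict_right_mono) auto
    finally show ?thesis by (simp add: mult.assoc)
  qed
  show ?thesis
  proof (rule ccontr)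
    assume "\<not> ?thesis"
    then consider "a < b" "3 \<le> b" | "b < a" "3 \<le> a" by linarith
    then show False using mono[of b a] mono[of a b] assms by cases auto
  qed
qed

lemma map_funpow: "(map f ^^ m) xs = map (f ^^ m) xs" for f :: "'a \<Rightarrow> 'a"
  by (induction m) simp_all

lemma card_fixed_tuples_eq_if_similar_on:
  assumes "s permutes {1..n}" "t permutes {1..n}"
    and "similar_on (tuples k n) (perm_rep s) (perm_rep t :: _ \<Rightarrow> _ \<Rightarrow> 'a::field_char_0)"
  shows "card {xs \<in> tuples k n. map (s ^^ m) xs = xs} = card {xs \<in> tuples k n. map (t ^^ m) xs = xs}"
proof -
  have trace: "mat_trace (tuples k n) (mat_pow (tuples k n) (perm_rep p) m)
      = (of_nat (card {xs \<in> tuples k n. map (p ^^ m) xs = xs}) :: 'a)" if "p permutes {1..n}" for p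
  proof -
    have "mat_trace (tuples k n) (mat_pow (tuples k n) (perm_rep p) m)
        = mat_trace (tuples k n) (fun_matrix (map p ^^ m))"
      unfolding perm_rep_eq_fun_matrix using map_in_tuples[OF that] finite_tuples
      by (intro mat_trace_cong) (auto simp: mat_eq_on_def intro!: mat_pow_fun_matrix)
    also have "\<dots> = of_nat (card {xs \<in> tuples k n. (map p ^^ m) xs = xs})"
      by (rule mat_trace_fun_matrix[OF finite_tuples])
    finally show ?thesis by (simp add: map_funpow)
  qed
  show ?thesis
    using similar_on_imp_trace_mat_pow_eq[OF finite_tuples assms(3), of m]
    unfolding trace[OF assms(1)] trace[OF assms(2)] by simp
qed

section \<open>Odd \<open>n\<close>\<close>

lemma conj_Sn_if_intertwined:
  assumes s: "s permutes {1..n}" and t: "t permutes {1..n}"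
    and h: "bij_betw h {1..n} {1..n}" "\<forall>i \<in> {1..n}. h (s i) = t (h i)"
  shows "conj_Sn n s t"
proof -
  define g where "g i = (if i \<in> {1..n} then h i else i)" for i
  have "bij_betw g {1..n} {1..n}"
    using h(1) by (rule bij_betw_cong[THEN iffD1, rotated]) (simp add: g_def)
  then have g: "g permutes {1..n}" by (rule bij_imp_permutes) (auto simp: g_def)
  have "g (s i) = t (g i)" for i
    using h(2) permutes_in_image[OF s] permutes_not_in[OF s] permutes_not_in[OF t]
    by (cases "i \<in> {1..n}") (auto simp: g_def)
  then have "t = g \<circ> s \<circ> inv g"
    using permutes_inverses(1)[OF g] by (auto simp: fun_eq_iff)
  then show ?thesis unfolding conj_Sn_def using g by blast
qed

theorem conj_Sn_if_similar_on_tuples_3: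
  assumes "odd n" and s: "s permutes {1..n}" and t: "t permutes {1..n}"
    and "similar_on (tuples 3 n) (perm_rep s) (perm_rep t :: _ \<Rightarrow> _ \<Rightarrow> 'a::field_char_0)"
  shows "conj_Sn n s t"
proof -
  let ?S = "{1..n}"
  have bij: "bij_betw s ?S ?S" "bij_betw t ?S ?S" using s t by (simp_all add: permutes_imp_bij)
  have close: "divisor_sum (period_count s ?S) m = divisor_sum (period_count t ?S) m
      \<or> (divisor_sum (period_count s ?S) m < 3 \<and> divisor_sum (period_count t ?S) m < 3)"
    if "0 < m" for m
    using falling_factorial_3_eq card_fixed_tuples_eq_if_similar_on[OF s t assms(4), of m]
    unfolding card_fixed_tuples_3[OF refl]
      card_fixed_points_eq_divisor_sum[OF finite_atLeastAtMost bij(1) that]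
      card_fixed_points_eq_divisor_sum[OF finite_atLeastAtMost bij(2) that]
    by blast
  interpret close_divisor_sums "period_count s ?S" "period_count t ?S" n
  proof
    show "d dvd period_count s ?S d" "d dvd period_count t ?S d" for d
      using period_count_dvd[OF _ bij(1)] period_count_dvd[OF _ bij(2)] by simp_all
    show "period_count s ?S d = 0" "period_count t ?S d = 0" if "n < d" for d
      using period_count_eq_0[OF _ bij(1)] period_count_eq_0[OF _ bij(2)] that by simp_all
    show "(\<Sum>d\<le>n. period_count s ?S d) = (\<Sum>d\<le>n. period_count t ?S d)"
      "odd (\<Sum>d\<le>n. period_count s ?S d)"
      using sum_period_count[OF _ bij(1)] sum_period_count[OF _ bij(2)] assms(1) by simp_all
  qed (fact close)
  obtain h where "bij_betw h ?S ?S" "\<forall>i \<in> ?S. h (s i) = t (h i)"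
    using intertwining_bij_if_period_count_eq[OF _ bij(1) _ bij(2)] counts_eq by auto
  then show ?thesis by (rule conj_Sn_if_intertwined[OF s t])
qed

section \<open>Even \<open>n\<close>\<close>

text \<open>For odd \<open>a\<close> and even \<open>n\<close> this is the involution \<open>(a a+1)(a+2 a+3)\<dots>(n-1 n)\<close>.\<close>
definition swap_pairs :: "nat \<Rightarrow> nat \<Rightarrow> nat \<Rightarrow> nat" where
  "swap_pairs a n i = (if i \<in> {a..n} then if odd i then i + 1 else i - 1 else i)"

lemma swap_pairs_swap_pairs: "odd a \<Longrightarrow> even n \<Longrightarrow> swap_pairs a n (swap_pairs a n i) = i"
  unfolding swap_pairs_def by (auto; presburger)

lemma swap_pairs_neq: "odd a \<Longrightarrow> i \<in> {a..n} \<Longrightarrow> swap_pairs a n i \<noteq> i"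
  unfolding swap_pairs_def by (auto; presburger)

lemma swap_pairs_permutes:
  assumes "odd a" "even n" "1 \<le> a"
  shows "swap_pairs a n permutes {1..n}"
proof -
  have "\<forall>j. \<exists>!i. swap_pairs a n i = j" using swap_pairs_swap_pairs[OF assms(1,2)] by metis
  then have "swap_pairs a n permutes {a..n}" unfolding permutes_def by (simp add: swap_pairs_def)
  then show ?thesis by (rule permutes_subset) (use assms(3) in auto)
qed

lemma not_conj_Sn_swap_pairs:
  assumes "3 \<le> n"
  shows "\<not> conj_Sn n (swap_pairs 1 n) (swap_pairs 3 n)"
proof
  assume "conj_Sn n (swap_pairs 1 n) (swap_pairs 3 n)"
  then obtain g where g: "g permutes {1..n}" "swap_pairs 3 n = g \<circ> swap_pairs 1 n \<circ> inv g"
    unfolding conj_Sn_def by blast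
  define i where "i = inv g 1"
  have "i \<in> {1..n}" unfolding i_def using permutes_in_image[OF permutes_inv[OF g(1)]] assms by simp
  have "g (swap_pairs 1 n i) = swap_pairs 3 n 1"
    using g(2) unfolding i_def by (metis comp_apply)
  also have "\<dots> = g i" unfolding i_def swap_pairs_def using permutes_inverses(1)[OF g(1)] by simp
  finally have "swap_pairs 1 n i = i" using permutes_inj[OF g(1)] by (simp add: inj_eq)
  with swap_pairs_neq[of 1 i n] \<open>i \<in> {1..n}\<close> show False by simp
qed

lemma period_map_swap_pairs:
  assumes "odd a" "even n" "a \<le> 3" "xs \<in> tuples 3 n"
  shows "period (map (swap_pairs a n)) xs = 2"
proof (rule period_eq_2_if_involution)
  show "map (swap_pairs a n) (map (swap_pairs a n) xs) = xs"
    using swap_pairs_swap_pairs[OF assms(1,2)] by (simp add: map_idI)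
  have "\<not> set xs \<subseteq> {1..<a}"
  proof
    assume "set xs \<subseteq> {1..<a}"
    then have "card (set xs) \<le> a - 1" using card_mono[of "{1..<a}" "set xs"] by simp
    moreover have "card (set xs) = 3" using assms(4) by (simp add: tuples_def distinct_card)
    ultimately show False using assms(3) by simp
  qed
  then obtain i where "i \<in> set xs" "i \<notin> {1..<a}" by blast
  then have "i \<in> {a..n}" using assms(4) by (auto simp: tuples_def)
  then show "map (swap_pairs a n) xs \<noteq> xs"
    using swap_pairs_neq[OF assms(1)] \<open>i \<in> set xs\<close> by (auto simp: map_eq_self_iff)
qed

theorem unites_conj_tuples_3_if_even:
  assumes "even n" "3 \<le> n"
  shows "unites_conj n (tuples 3 n) (perm_rep :: _ \<Rightarrow> _ \<Rightarrow> _ \<Rightarrow> 'a::field)"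
proof -
  let ?s = "swap_pairs 1 n" and ?t = "swap_pairs 3 n" and ?X = "tuples 3 n"
  have s: "?s permutes {1..n}" and t: "?t permutes {1..n}"
    using swap_pairs_permutes[of _ n] assms(1) by simp_all
  have "period_count (map ?s) ?X d = period_count (map ?t) ?X d" for d
    using period_map_swap_pairs[of 1 n] period_map_swap_pairs[of 3 n] assms(1)
    by (simp add: period_count_def cong: conj_cong)
  then obtain h where h: "bij_betw h ?X ?X" "\<forall>xs \<in> ?X. h (map ?s xs) = map ?t (h xs)"
    using intertwining_bij_if_period_count_eq[OF finite_tuples bij_betw_map_tuples[OF s]
        finite_tuples bij_betw_map_tuples[OF t]] by blast
  have "similar_on ?X (perm_rep ?s) (perm_rep ?t :: _ \<Rightarrow> _ \<Rightarrow> 'a)"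
    unfolding perm_rep_eq_fun_matrix
    using similar_on_fun_matrix_if_intertwined[OF finite_tuples h(1) _ h(2)] map_in_tuples[OF s] by blast
  then show ?thesis
    unfolding unites_conj_def using s t not_conj_Sn_swap_pairs[OF assms(2)] by blast
qed

theorem mainTheorem11:
  fixes n :: nat
  assumes "n \<ge> 3"
  shows "unites_conj n (tuples 3 n) (perm_rep :: (nat \<Rightarrow> nat) \<Rightarrow> nat list \<Rightarrow> nat list \<Rightarrow> complex)
         \<longleftrightarrow> even n"
proof
  assume "unites_conj n (tuples 3 n) (perm_rep :: (nat \<Rightarrow> nat) \<Rightarrow> nat list \<Rightarrow> nat list \<Rightarrow> complex)"
  then obtain s t where "s permutes {1..n}" "t permutes {1..n}" "\<not> conj_Sn n s t"
    and "similar_on (tuples 3 n) (perm_rep s) (perm_rep t :: nat list \<Rightarrow> nat list \<Rightarrow> complex)"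
    unfolding unites_conj_def by blast
  then show "even n" using conj_Sn_if_similar_on_tuples_3 by blast
next
  assume "even n"
  then show "unites_conj n (tuples 3 n) (perm_rep :: (nat \<Rightarrow> nat) \<Rightarrow> nat list \<Rightarrow> nat list \<Rightarrow> complex)"
    using unites_conj_tuples_3_if_even assms by blast
qed

end
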